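(* Let $\xi,\xi'\in\mathscr C$ with $D_i^\#(\xi)=\xi$ for every $i\in I$. Then $D_0^\#(\xi\xi')=\xi\,D_0^\#(\xi')$.
   Context: $G$ is a simply connected simple algebraic group over $\mathbb C$ with maximal torus $H$, Weyl group $W$, weight lattice $P$, simple roots $\alpha_i$ and simple reflections $s_i$ ($i\in I$), highest root $\vartheta$ with coroot $\vartheta^\vee$ and reflection $s_\vartheta$, coroot lattice $Q^\vee$ (on which $W$ acts). $\mathbb C(P)$ is the fraction field of the group algebra $\mathbb CP$ (basis $e^\lambda$), with $W$ acting by $w(e^\lambda)=e^{w\lambda}$. $\mathscr C=\mathbb C(P)\otimes\mathbb CQ^\vee$, with basis symbols $t_\beta$, is the commutative algebra with $(f\otimes t_\beta)(g\otimes t_\gamma)=fg\otimes t_{\beta+\gamma}$. The $\mathbb C$-linear operators $D_i^\#$ ($i\in I$) and $D_0^\#$ on $\mathscr C$ are $$D_i^\#(f\otimes t_\beta)=\frac{f}{1-e^{\alpha_i}}\otimes t_\beta-\frac{e^{\alpha_i}s_i(f)}{1-e^{\alpha_i}}\otimes t_{s_i\beta},$$ $$D_0^\#(f\otimes t_\beta)=\frac{f}{1-e^{-\vartheta}}\otimes t_\beta-\frac{e^{-\vartheta}s_\vartheta(f)}{1-e^{-\vartheta}}\otimes t_{s_\vartheta(\beta-\vartheta^\vee)}.$$ *)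

theory Defs
  imports Complex_Main "HOL-Library.Poly_Mapping" "HOL-Computational_Algebra.Fraction_Field"
begin

(* Root datum of a simply connected simple group, encoded by its Cartan matrix
   A :: 'i => 'i => int with  A i j = <alpha_i^vee, alpha_j>.
   The index set I is the finite type 'i (the linorder is only a technical device
   needed for the idom instance of the group algebra).
   Weight lattice P  = 'i =>0 int  (coordinates w.r.t. fundamental weights omega_j;
                                     P is the full weight lattice: simply connected)
   Coroot lattice Q^vee = 'i =>0 int (coordinates w.r.t. simple coroots alpha_j^vee). *)

type_synonym 'i lat = "'i \<Rightarrow>\<^sub>0 int"
type_synonym 'i grpalg = "'i lat \<Rightarrow>\<^sub>0 complex"
type_synonym 'i fracfield = "'i grpalg fract"
type_synonym 'i calC = "'i lat \<Rightarrow>\<^sub>0 'i fracfield"     (* C(P) (x) CQ^vee, t_beta basis *)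

definition pairing :: "'i::finite lat \<Rightarrow> 'i lat \<Rightarrow> int" where
  "pairing \<beta> lam = (\<Sum>j\<in>UNIV. Poly_Mapping.lookup \<beta> j * Poly_Mapping.lookup lam j)"

definition sroot :: "('i::finite \<Rightarrow> 'i \<Rightarrow> int) \<Rightarrow> 'i \<Rightarrow> 'i lat" where
  "sroot A i = (\<Sum>j\<in>UNIV. Poly_Mapping.single j (A j i))"

definition scoroot :: "'i \<Rightarrow> 'i lat" where
  "scoroot i = Poly_Mapping.single i 1"

definition reflP :: "'i::finite lat \<Rightarrow> 'i lat \<Rightarrow> 'i lat \<Rightarrow> 'i lat" where
  "reflP \<gamma> \<gamma>v lam = lam - frag_cmul (pairing \<gamma>v lam) \<gamma>"

definition reflQ :: "'i::finite lat \<Rightarrow> 'i lat \<Rightarrow> 'i lat \<Rightarrow> 'i lat" where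
  "reflQ \<gamma> \<gamma>v \<beta> = \<beta> - frag_cmul (pairing \<beta> \<gamma>) \<gamma>v"

definition siP :: "('i::finite \<Rightarrow> 'i \<Rightarrow> int) \<Rightarrow> 'i \<Rightarrow> 'i lat \<Rightarrow> 'i lat" where
  "siP A i = reflP (sroot A i) (scoroot i)"

definition siQ :: "('i::finite \<Rightarrow> 'i \<Rightarrow> int) \<Rightarrow> 'i \<Rightarrow> 'i lat \<Rightarrow> 'i lat" where
  "siQ A i = reflQ (sroot A i) (scoroot i)"

definition weylP :: "('i::finite \<Rightarrow> 'i \<Rightarrow> int) \<Rightarrow> 'i list \<Rightarrow> 'i lat \<Rightarrow> 'i lat" where
  "weylP A w = foldr (\<lambda>i f. siP A i \<circ> f) w id"

definition is_GCM :: "('i \<Rightarrow> 'i \<Rightarrow> int) \<Rightarrow> bool" where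
  "is_GCM A \<longleftrightarrow> (\<forall>i. A i i = 2) \<and> (\<forall>i j. i \<noteq> j \<longrightarrow> A i j \<le> 0)
      \<and> (\<forall>i j. A i j = 0 \<longleftrightarrow> A j i = 0)"

definition indecomposable :: "('i \<Rightarrow> 'i \<Rightarrow> int) \<Rightarrow> bool" where
  "indecomposable A \<longleftrightarrow> \<not> (\<exists>J. J \<noteq> {} \<and> J \<noteq> UNIV \<and> (\<forall>j\<in>J. \<forall>k\<in>-J. A j k = 0))"

(* Cartan matrix of a simple (irreducible, finite type) root system:
   indecomposable GCM with finite Weyl group (Kac, Prop. 4.9) *)
definition simple_cartan :: "('i::finite \<Rightarrow> 'i \<Rightarrow> int) \<Rightarrow> bool" where
  "simple_cartan A \<longleftrightarrow> is_GCM A \<and> indecomposable A \<and> finite (range (weylP A))"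

inductive_set rootpairs :: "('i::finite \<Rightarrow> 'i \<Rightarrow> int) \<Rightarrow> ('i lat \<times> 'i lat) set"
  for A where
  simple: "(sroot A i, scoroot i) \<in> rootpairs A"
| refl: "(\<gamma>, \<gamma>v) \<in> rootpairs A \<Longrightarrow> (siP A i \<gamma>, siQ A i \<gamma>v) \<in> rootpairs A"

definition in_Qplus :: "('i::finite \<Rightarrow> 'i \<Rightarrow> int) \<Rightarrow> 'i lat \<Rightarrow> bool" where
  "in_Qplus A \<mu> \<longleftrightarrow> (\<exists>c::'i \<Rightarrow> nat. \<mu> = (\<Sum>i\<in>UNIV. frag_cmul (int (c i)) (sroot A i)))"

definition highest_root :: "('i::finite \<Rightarrow> 'i \<Rightarrow> int) \<Rightarrow> 'i lat \<Rightarrow> 'i lat \<Rightarrow> bool" where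
  "highest_root A \<theta> \<theta>v \<longleftrightarrow> (\<theta>, \<theta>v) \<in> rootpairs A
      \<and> (\<forall>\<gamma> \<in> fst ` rootpairs A. in_Qplus A (\<theta> - \<gamma>))"

definition gact :: "('i lat \<Rightarrow> 'i lat) \<Rightarrow> 'i::linorder grpalg \<Rightarrow> 'i grpalg" where
  "gact \<sigma> f = (\<Sum>\<mu>\<in>Poly_Mapping.keys f. Poly_Mapping.single (\<sigma> \<mu>) (Poly_Mapping.lookup f \<mu>))"

definition fact :: "('i lat \<Rightarrow> 'i lat) \<Rightarrow> 'i::linorder fracfield \<Rightarrow> 'i fracfield" where
  "fact \<sigma> x = (SOME y. \<exists>a b. b \<noteq> 0 \<and> x = Fract a b \<and> y = Fract (gact \<sigma> a) (gact \<sigma> b))"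

definition ee :: "'i::linorder lat \<Rightarrow> 'i fracfield" where
  "ee lam = Fract (Poly_Mapping.single lam 1) 1"

definition Dop :: "'i::linorder fracfield \<Rightarrow> ('i lat \<Rightarrow> 'i lat) \<Rightarrow> ('i lat \<Rightarrow> 'i lat)
                   \<Rightarrow> 'i calC \<Rightarrow> 'i calC" where
  "Dop e \<sigma> \<tau> \<xi> = (\<Sum>\<beta>\<in>Poly_Mapping.keys \<xi>.
      Poly_Mapping.single \<beta> (Poly_Mapping.lookup \<xi> \<beta> / (1 - e))
    - Poly_Mapping.single (\<tau> \<beta>) (e * fact \<sigma> (Poly_Mapping.lookup \<xi> \<beta>) / (1 - e)))"

definition Dsharp :: "('i::{finite,linorder} \<Rightarrow> 'i \<Rightarrow> int) \<Rightarrow> 'i \<Rightarrow> 'i calC \<Rightarrow> 'i calC" where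
  "Dsharp A i = Dop (ee (sroot A i)) (siP A i) (siQ A i)"

definition Dsharp0 :: "'i::{finite,linorder} lat \<Rightarrow> 'i lat \<Rightarrow> 'i calC \<Rightarrow> 'i calC" where
  "Dsharp0 \<theta> \<theta>v = Dop (ee (- \<theta>)) (reflP \<theta> \<theta>v) (\<lambda>\<beta>. reflQ \<theta> \<theta>v (\<beta> - \<theta>v))"

end

theory Submission
  imports Defs
begin

text \<open>
  For maps \<open>\<sigma>\<close> of \<open>P\<close> and \<open>\<tau>\<close> of \<open>Q\<^sup>\<vee>\<close>, let \<open>twist \<sigma> \<tau>\<close> be the semilinear map
  \<open>f \<otimes> t\<^sub>\<beta> \<mapsto> \<sigma>(f) \<otimes> t\<^bsub>\<tau> \<beta>\<^esub>\<close>. Every operator of the shape of \<open>D\<^sub>i\<^sup>#\<close> and \<open>D\<^sub>0\<^sup>#\<close> is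
  \<open>\<xi> \<mapsto> (\<xi> - e \<cdot> twist \<sigma> \<tau> \<xi>) / (1 - e)\<close>, so as \<open>e \<noteq> 0\<close> a fixed point \<open>\<xi>\<close> of all \<open>D\<^sub>i\<^sup>#\<close>
  is fixed by every \<open>twist s\<^sub>i s\<^sub>i\<close>. Twists compose, and the root pairs arise from the simple ones
  by simple reflections, with \<open>s\<^bsub>s\<^sub>i \<gamma>\<^esub> = s\<^sub>i s\<^sub>\<gamma> s\<^sub>i\<close>; hence \<open>\<xi>\<close> is also fixed by
  \<open>twist s\<^sub>\<vartheta> s\<^sub>\<vartheta>\<close>. Finally \<open>\<tau> \<beta> = s\<^sub>\<vartheta>(\<beta> - \<vartheta>\<^sup>\<vee>)\<close> satisfies
  \<open>\<tau> (\<beta> + \<beta>') = s\<^sub>\<vartheta> \<beta> + \<tau> \<beta>'\<close>, so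
  \<open>twist s\<^sub>\<vartheta> \<tau> (\<xi> \<xi>') = twist s\<^sub>\<vartheta> s\<^sub>\<vartheta> \<xi> \<cdot> twist s\<^sub>\<vartheta> \<tau> \<xi>' = \<xi> \<cdot> twist s\<^sub>\<vartheta> \<tau> \<xi>'\<close>
  and \<open>\<xi>\<close> factors out of \<open>D\<^sub>0\<^sup>#(\<xi> \<xi>')\<close>.
\<close>

lemma poly_mapping_sum_single:
  "p = (\<Sum>k\<in>Poly_Mapping.keys p. Poly_Mapping.single k (Poly_Mapping.lookup p k))"
  by (rule poly_mapping_eqI) (simp add: lookup_sum lookup_single when_def in_keys_iff)

lemma additive_comp: "additive f \<Longrightarrow> additive g \<Longrightarrow> additive (f \<circ> g)"
  by (simp add: additive_def)

definition pm_remap :: "('b::zero \<Rightarrow> 'c::comm_monoid_add) \<Rightarrow> ('a \<Rightarrow> 'd) \<Rightarrow> ('a \<Rightarrow>\<^sub>0 'b) \<Rightarrow> 'd \<Rightarrow>\<^sub>0 'c"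
  where "pm_remap \<phi> \<tau> f =
    (\<Sum>\<mu>\<in>Poly_Mapping.keys f. Poly_Mapping.single (\<tau> \<mu>) (\<phi> (Poly_Mapping.lookup f \<mu>)))"

lemma pm_remap_eq_sum_superset:
  assumes "finite S" "Poly_Mapping.keys f \<subseteq> S" "\<phi> 0 = 0"
  shows "pm_remap \<phi> \<tau> f = (\<Sum>\<mu>\<in>S. Poly_Mapping.single (\<tau> \<mu>) (\<phi> (Poly_Mapping.lookup f \<mu>)))"
  unfolding pm_remap_def
  by (rule sum.mono_neutral_left) (use assms in \<open>auto simp: in_keys_iff\<close>)

lemma pm_remap_single:
  "\<phi> 0 = 0 \<Longrightarrow> pm_remap \<phi> \<tau> (Poly_Mapping.single \<mu> c) = Poly_Mapping.single (\<tau> \<mu>) (\<phi> c)"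
  by (cases "c = 0") (simp_all add: pm_remap_def)

lemma pm_remap_id: "pm_remap id id f = f"
  by (simp add: pm_remap_def flip: poly_mapping_sum_single)

lemma additive_pm_remap:
  fixes \<phi> :: "'b::ab_group_add \<Rightarrow> 'c::ab_group_add"
  assumes "additive \<phi>"
  shows "additive (pm_remap \<phi> \<tau>)"
proof
  fix f g :: "'a \<Rightarrow>\<^sub>0 'b"
  interpret additive \<phi> by fact
  let ?S = "Poly_Mapping.keys f \<union> Poly_Mapping.keys g"
  have "pm_remap \<phi> \<tau> (f + g) =
      (\<Sum>\<mu>\<in>?S. Poly_Mapping.single (\<tau> \<mu>) (\<phi> (Poly_Mapping.lookup (f + g) \<mu>)))"
    by (rule pm_remap_eq_sum_superset) (auto simp: zero keys_add)
  also have "\<dots> = (\<Sum>\<mu>\<in>?S. Poly_Mapping.single (\<tau> \<mu>) (\<phi> (Poly_Mapping.lookup f \<mu>)))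
      + (\<Sum>\<mu>\<in>?S. Poly_Mapping.single (\<tau> \<mu>) (\<phi> (Poly_Mapping.lookup g \<mu>)))"
    by (simp add: lookup_add add single_add sum.distrib)
  also have "\<dots> = pm_remap \<phi> \<tau> f + pm_remap \<phi> \<tau> g"
    by (subst (1 2) pm_remap_eq_sum_superset[of ?S]) (auto simp: zero)
  finally show "pm_remap \<phi> \<tau> (f + g) = pm_remap \<phi> \<tau> f + pm_remap \<phi> \<tau> g" .
qed

lemma pm_remap_comp:
  assumes "additive \<phi>\<^sub>1" "\<phi>\<^sub>2 0 = 0"
  shows "pm_remap \<phi>\<^sub>1 \<tau>\<^sub>1 (pm_remap \<phi>\<^sub>2 \<tau>\<^sub>2 f) = pm_remap (\<phi>\<^sub>1 \<circ> \<phi>\<^sub>2) (\<tau>\<^sub>1 \<circ> \<tau>\<^sub>2) f"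
proof -
  interpret additive "pm_remap \<phi>\<^sub>1 \<tau>\<^sub>1"
    using assms(1) by (rule additive_pm_remap)
  show ?thesis
    using assms additive.zero[OF assms(1)]
    by (simp add: pm_remap_def[of \<phi>\<^sub>2] sum pm_remap_single) (simp add: pm_remap_def)
qed

lemma pm_remap_mult:
  fixes \<phi> :: "'b::comm_ring_1 \<Rightarrow> 'c::comm_ring_1"
    and \<tau> \<tau>\<^sub>1 :: "'a::comm_monoid_add \<Rightarrow> 'd::comm_monoid_add"
  assumes "additive \<phi>" and mult: "\<And>x y. \<phi> (x * y) = \<phi> x * \<phi> y"
    and affine: "\<And>a b. \<tau> (a + b) = \<tau>\<^sub>1 a + \<tau> b"
  shows "pm_remap \<phi> \<tau> (f * g) = pm_remap \<phi> \<tau>\<^sub>1 f * pm_remap \<phi> \<tau> g"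
proof -
  interpret additive "pm_remap \<phi> \<tau>"
    using assms(1) by (rule additive_pm_remap)
  have "f * g = (\<Sum>a\<in>Poly_Mapping.keys f. \<Sum>b\<in>Poly_Mapping.keys g.
      Poly_Mapping.single (a + b) (Poly_Mapping.lookup f a * Poly_Mapping.lookup g b))"
    by (subst (1 2) poly_mapping_sum_single) (simp add: sum_product mult_single)
  then have "pm_remap \<phi> \<tau> (f * g) = (\<Sum>a\<in>Poly_Mapping.keys f. \<Sum>b\<in>Poly_Mapping.keys g.
      Poly_Mapping.single (\<tau>\<^sub>1 a + \<tau> b) (\<phi> (Poly_Mapping.lookup f a) * \<phi> (Poly_Mapping.lookup g b)))"
    by (simp add: sum pm_remap_single additive.zero[OF assms(1)] affine mult)
  also have "\<dots> = pm_remap \<phi> \<tau>\<^sub>1 f * pm_remap \<phi> \<tau> g"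
    by (simp add: pm_remap_def sum_product mult_single)
  finally show ?thesis .
qed

lemma single_0_mult_pm_remap:
  "Poly_Mapping.single 0 c * pm_remap \<phi> \<tau> f = pm_remap (\<lambda>x. c * \<phi> x) \<tau> f"
  by (simp add: pm_remap_def sum_distrib_left mult_single)

lemma single_0_mult_eq_pm_remap:
  "Poly_Mapping.single 0 c * f = pm_remap (\<lambda>x. c * x) id f"
  using single_0_mult_pm_remap[of c id id f] by (simp add: pm_remap_id)

lemma gact_eq_pm_remap: "gact \<sigma> = pm_remap id \<sigma>"
  by (simp add: fun_eq_iff gact_def pm_remap_def)

lemma additive_gact: "additive (gact \<sigma>)"
  unfolding gact_eq_pm_remap by (rule additive_pm_remap) (simp add: additive_def)

lemma gact_mult: "additive \<sigma> \<Longrightarrow> gact \<sigma> (f * g) = gact \<sigma> f * gact \<sigma> g"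
  unfolding gact_eq_pm_remap by (rule pm_remap_mult) (simp_all add: additive_def additive.add)

lemma gact_comp: "gact \<sigma>\<^sub>1 (gact \<sigma>\<^sub>2 f) = gact (\<sigma>\<^sub>1 \<circ> \<sigma>\<^sub>2) f"
  unfolding gact_eq_pm_remap by (subst pm_remap_comp) (simp_all add: additive_def)

lemma gact_eq_0_iff: "inj \<sigma> \<Longrightarrow> gact \<sigma> f = 0 \<longleftrightarrow> f = 0"
  by (metis gact_comp gact_eq_pm_remap inv_o_cancel pm_remap_id additive.zero additive_gact)

lemma fact_Fract:
  assumes "additive \<sigma>" "inj \<sigma>" "b \<noteq> 0"
  shows "fact \<sigma> (Fract a b) = Fract (gact \<sigma> a) (gact \<sigma> b)"
  unfolding fact_def
proof (rule someI2)
  show "\<exists>a' b'. b' \<noteq> 0 \<and> Fract a b = Fract a' b'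
      \<and> Fract (gact \<sigma> a) (gact \<sigma> b) = Fract (gact \<sigma> a') (gact \<sigma> b')"
    using assms(3) by blast
next
  fix y
  assume "\<exists>a' b'. b' \<noteq> 0 \<and> Fract a b = Fract a' b' \<and> y = Fract (gact \<sigma> a') (gact \<sigma> b')"
  then obtain a' b' where "b' \<noteq> 0" "Fract a b = Fract a' b'" "y = Fract (gact \<sigma> a') (gact \<sigma> b')"
    by blast
  moreover from this have "gact \<sigma> a * gact \<sigma> b' = gact \<sigma> a' * gact \<sigma> b"
    using assms by (simp add: eq_fract flip: gact_mult)
  ultimately show "y = Fract (gact \<sigma> a) (gact \<sigma> b)"
    using assms by (simp add: eq_fract gact_eq_0_iff)
qed

lemma additive_fact:
  fixes \<sigma> :: "'i::linorder lat \<Rightarrow> 'i lat"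
  assumes "additive \<sigma>" "inj \<sigma>"
  shows "additive (fact \<sigma>)"
proof
  fix x y :: "'i::linorder fracfield"
  show "fact \<sigma> (x + y) = fact \<sigma> x + fact \<sigma> y"
    by (cases x, cases y)
      (use assms in \<open>simp add: fact_Fract gact_eq_0_iff gact_mult additive.add[OF additive_gact]\<close>)
qed

lemma fact_mult:
  assumes "additive \<sigma>" "inj \<sigma>"
  shows "fact \<sigma> (x * y) = fact \<sigma> x * fact \<sigma> y"
  by (cases x, cases y) (use assms in \<open>simp add: fact_Fract gact_eq_0_iff gact_mult\<close>)

lemma fact_comp:
  assumes "additive \<sigma>\<^sub>1" "inj \<sigma>\<^sub>1" "additive \<sigma>\<^sub>2" "inj \<sigma>\<^sub>2"
  shows "fact \<sigma>\<^sub>1 (fact \<sigma>\<^sub>2 x) = fact (\<sigma>\<^sub>1 \<circ> \<sigma>\<^sub>2) x"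
proof -
  have "additive (\<sigma>\<^sub>1 \<circ> \<sigma>\<^sub>2)" "inj (\<sigma>\<^sub>1 \<circ> \<sigma>\<^sub>2)"
    using assms by (simp_all add: additive_comp inj_compose)
  then show ?thesis
    by (cases x) (use assms in \<open>simp add: fact_Fract gact_eq_0_iff gact_comp\<close>)
qed

lemma ee_nonzero: "ee lam \<noteq> 0"
  by (simp add: ee_def Zero_fract_def eq_fract) (metis lookup_single_eq lookup_zero one_neq_zero)

lemma lookup_reflP:
  "Poly_Mapping.lookup (reflP \<gamma> \<gamma>v lam) j =
    Poly_Mapping.lookup lam j - pairing \<gamma>v lam * Poly_Mapping.lookup \<gamma> j"
  by (simp add: reflP_def lookup_minus)

lemma lookup_reflQ:
  "Poly_Mapping.lookup (reflQ \<gamma> \<gamma>v \<beta>) j =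
    Poly_Mapping.lookup \<beta> j - pairing \<beta> \<gamma> * Poly_Mapping.lookup \<gamma>v j"
  by (simp add: reflQ_def lookup_minus)

lemma pairing_add_left: "pairing (\<beta> + \<beta>') lam = pairing \<beta> lam + pairing \<beta>' lam"
  by (simp add: pairing_def lookup_add algebra_simps sum.distrib)

lemma pairing_add_right: "pairing \<beta> (lam + lam') = pairing \<beta> lam + pairing \<beta> lam'"
  by (simp add: pairing_def lookup_add algebra_simps sum.distrib)

lemma pairing_reflP_right:
  "pairing \<beta> (reflP \<gamma> \<gamma>v lam) = pairing \<beta> lam - pairing \<gamma>v lam * pairing \<beta> \<gamma>"
  by (simp add: pairing_def lookup_reflP algebra_simps sum_subtractf sum_distrib_left) (rule sum.swap)

lemma pairing_reflQ_left:
  "pairing (reflQ \<gamma> \<gamma>v \<beta>) lam = pairing \<beta> lam - pairing \<beta> \<gamma> * pairing \<gamma>v lam"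
  by (simp add: pairing_def lookup_reflQ algebra_simps sum_subtractf sum_distrib_left)

lemma pairing_scoroot_sroot: "pairing (scoroot i) (sroot A i) = A i i"
proof -
  have "pairing (scoroot i) (sroot A i) = (\<Sum>j\<in>UNIV. if i = j then A i i else 0)"
    unfolding pairing_def scoroot_def sroot_def
    by (rule sum.cong) (auto simp: lookup_single lookup_sum when_def)
  then show ?thesis by simp
qed

lemma additive_reflP: "additive (reflP \<gamma> \<gamma>v)"
  by standard (rule poly_mapping_eqI, simp add: lookup_reflP lookup_add pairing_add_right algebra_simps)

lemma additive_reflQ: "additive (reflQ \<gamma> \<gamma>v)"
  by standard (rule poly_mapping_eqI, simp add: lookup_reflQ lookup_add pairing_add_left algebra_simps)

lemma reflP_reflP:
  "pairing \<gamma>v \<gamma> = 2 \<Longrightarrow> reflP \<gamma> \<gamma>v (reflP \<gamma> \<gamma>v lam) = lam"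
  by (rule poly_mapping_eqI) (simp add: lookup_reflP pairing_reflP_right algebra_simps)

lemma inj_reflP: "pairing \<gamma>v \<gamma> = 2 \<Longrightarrow> inj (reflP \<gamma> \<gamma>v)"
  by (metis injI reflP_reflP)

lemma pairing_reflQ_reflP:
  "pairing \<alpha>v \<alpha> = 2 \<Longrightarrow> pairing (reflQ \<alpha> \<alpha>v \<beta>) (reflP \<alpha> \<alpha>v lam) = pairing \<beta> lam"
  by (simp add: pairing_reflP_right pairing_reflQ_left algebra_simps)

lemma reflP_conj:
  "pairing \<alpha>v \<alpha> = 2 \<Longrightarrow>
    reflP (reflP \<alpha> \<alpha>v \<gamma>) (reflQ \<alpha> \<alpha>v \<gamma>v) = reflP \<alpha> \<alpha>v \<circ> reflP \<gamma> \<gamma>v \<circ> reflP \<alpha> \<alpha>v"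
  by (intro ext poly_mapping_eqI)
    (simp add: lookup_reflP pairing_reflP_right pairing_reflQ_left algebra_simps)

lemma reflQ_conj:
  "pairing \<alpha>v \<alpha> = 2 \<Longrightarrow>
    reflQ (reflP \<alpha> \<alpha>v \<gamma>) (reflQ \<alpha> \<alpha>v \<gamma>v) = reflQ \<alpha> \<alpha>v \<circ> reflQ \<gamma> \<gamma>v \<circ> reflQ \<alpha> \<alpha>v"
  by (intro ext poly_mapping_eqI)
    (simp add: lookup_reflQ pairing_reflP_right pairing_reflQ_left algebra_simps)

definition twist :: "('i::linorder lat \<Rightarrow> 'i lat) \<Rightarrow> ('i lat \<Rightarrow> 'i lat) \<Rightarrow> 'i calC \<Rightarrow> 'i calC"
  where "twist \<sigma> \<tau> = pm_remap (fact \<sigma>) \<tau>"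

lemma twist_comp:
  assumes "additive \<sigma>\<^sub>1" "inj \<sigma>\<^sub>1" "additive \<sigma>\<^sub>2" "inj \<sigma>\<^sub>2"
  shows "twist \<sigma>\<^sub>1 \<tau>\<^sub>1 (twist \<sigma>\<^sub>2 \<tau>\<^sub>2 \<xi>) = twist (\<sigma>\<^sub>1 \<circ> \<sigma>\<^sub>2) (\<tau>\<^sub>1 \<circ> \<tau>\<^sub>2) \<xi>"
proof -
  have "fact \<sigma>\<^sub>1 \<circ> fact \<sigma>\<^sub>2 = fact (\<sigma>\<^sub>1 \<circ> \<sigma>\<^sub>2)"
    using assms by (simp add: fun_eq_iff fact_comp)
  then show ?thesis
    using assms unfolding twist_def
    by (simp add: pm_remap_comp additive_fact additive.zero[OF additive_fact])
qed

lemma twist_mult: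
  assumes "additive \<sigma>" "inj \<sigma>" "\<And>\<beta> \<beta>'. \<tau> (\<beta> + \<beta>') = \<tau>\<^sub>1 \<beta> + \<tau> \<beta>'"
  shows "twist \<sigma> \<tau> (\<xi> * \<xi>') = twist \<sigma> \<tau>\<^sub>1 \<xi> * twist \<sigma> \<tau> \<xi>'"
  unfolding twist_def using assms by (intro pm_remap_mult additive_fact fact_mult)

lemma Dop_eq_twist:
  "Dop e \<sigma> \<tau> \<xi> = Poly_Mapping.single 0 (1 / (1 - e)) * \<xi>
    - Poly_Mapping.single 0 (e / (1 - e)) * twist \<sigma> \<tau> \<xi>"
  unfolding twist_def single_0_mult_pm_remap
  unfolding single_0_mult_eq_pm_remap
  by (simp add: Dop_def pm_remap_def sum_subtractf)

text \<open>For \<open>e = 1\<close> the junk value \<open>x / 0 = 0\<close> makes \<open>Dop e \<sigma> \<tau>\<close> vanish, so only \<open>\<xi> = 0\<close> is fixed.\<close>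

lemma twist_fixed_if_Dop_fixed:
  assumes "Dop e \<sigma> \<tau> \<xi> = \<xi>" "e \<noteq> 0"
  shows "twist \<sigma> \<tau> \<xi> = \<xi>"
proof (cases "e = 1")
  case True
  with assms show ?thesis by (simp add: Dop_eq_twist twist_def pm_remap_def)
next
  case False
  let ?d = "e / (1 - e)"
  have "1 / (1 - e) = ?d + 1"
    using False by (simp add: field_simps)
  then have c: "Poly_Mapping.single 0 (1 / (1 - e)) = Poly_Mapping.single 0 ?d + 1"
    by (simp add: single_add)
  have "Poly_Mapping.single 0 ?d * \<xi> = (Poly_Mapping.single 0 ?d + 1) * \<xi> - \<xi>"
    by (simp add: distrib_right)
  also have "\<dots> = Poly_Mapping.single 0 ?d * twist \<sigma> \<tau> \<xi>"
    using assms(1) unfolding Dop_eq_twist c by (simp add: diff_eq_eq add.commute)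
  finally have "Poly_Mapping.single 0 ?d * \<xi> = Poly_Mapping.single 0 ?d * twist \<sigma> \<tau> \<xi>" .
  moreover have "Poly_Mapping.single 0 ?d \<noteq> 0"
    using False assms(2) by (metis divide_eq_0_iff eq_iff_diff_eq_0 lookup_single_eq lookup_zero)
  ultimately show ?thesis
    by auto
qed

lemma Dop_mult_of_twist_fixed:
  assumes "additive \<sigma>" "inj \<sigma>" "\<And>\<beta> \<beta>'. \<tau> (\<beta> + \<beta>') = \<tau>\<^sub>1 \<beta> + \<tau> \<beta>'"
    and "twist \<sigma> \<tau>\<^sub>1 \<xi> = \<xi>"
  shows "Dop e \<sigma> \<tau> (\<xi> * \<xi>') = \<xi> * Dop e \<sigma> \<tau> \<xi>'"
  using assms by (simp add: Dop_eq_twist twist_mult algebra_simps)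

lemma rootpairs_pairing_eq_2:
  "(\<gamma>, \<gamma>v) \<in> rootpairs A \<Longrightarrow> (\<And>i. A i i = 2) \<Longrightarrow> pairing \<gamma>v \<gamma> = 2"
  by (induction rule: rootpairs.induct)
    (simp_all add: pairing_scoroot_sroot siP_def siQ_def pairing_reflQ_reflP)

lemma rootpairs_twist_fixed:
  assumes "(\<gamma>, \<gamma>v) \<in> rootpairs A" "\<And>i. A i i = 2"
    and simple_fixed: "\<And>i. twist (siP A i) (siQ A i) \<xi> = \<xi>"
  shows "twist (reflP \<gamma> \<gamma>v) (reflQ \<gamma> \<gamma>v) \<xi> = \<xi>"
  using assms(1)
proof (induction rule: rootpairs.induct)
  case (simple i)
  then show ?case using simple_fixed[of i] by (simp add: siP_def siQ_def)
next
  case (refl \<gamma> \<gamma>v i)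
  let ?s\<^sub>P = "reflP (sroot A i) (scoroot i)" and ?s\<^sub>Q = "reflQ (sroot A i) (scoroot i)"
  have "pairing (scoroot i) (sroot A i) = 2" "pairing \<gamma>v \<gamma> = 2"
    using refl.hyps assms(2) by (simp_all add: pairing_scoroot_sroot rootpairs_pairing_eq_2)
  then have s: "additive ?s\<^sub>P" "inj ?s\<^sub>P" and r: "additive (reflP \<gamma> \<gamma>v)" "inj (reflP \<gamma> \<gamma>v)"
    by (simp_all add: additive_reflP inj_reflP)
  have "twist ?s\<^sub>P ?s\<^sub>Q (twist (reflP \<gamma> \<gamma>v) (reflQ \<gamma> \<gamma>v) (twist ?s\<^sub>P ?s\<^sub>Q \<xi>)) =
      twist (?s\<^sub>P \<circ> (reflP \<gamma> \<gamma>v \<circ> ?s\<^sub>P)) (?s\<^sub>Q \<circ> (reflQ \<gamma> \<gamma>v \<circ> ?s\<^sub>Q)) \<xi>"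
    using s r by (simp add: twist_comp additive_comp inj_compose)
  also have "\<dots> = twist (reflP (siP A i \<gamma>) (siQ A i \<gamma>v)) (reflQ (siP A i \<gamma>) (siQ A i \<gamma>v)) \<xi>"
    using \<open>pairing (scoroot i) (sroot A i) = 2\<close> by (simp add: siP_def siQ_def reflP_conj reflQ_conj comp_assoc)
  finally show ?case
    using simple_fixed[of i] refl.IH by (simp add: siP_def siQ_def)
qed

theorem lemma2p6:
  fixes A :: "'i::{finite,linorder} \<Rightarrow> 'i \<Rightarrow> int"
    and \<theta> \<theta>v :: "'i lat"
    and \<xi> \<xi>' :: "'i calC"
  assumes "simple_cartan A"
    and "highest_root A \<theta> \<theta>v"
    and "\<forall>i. Dsharp A i \<xi> = \<xi>"
  shows "Dsharp0 \<theta> \<theta>v (\<xi> * \<xi>') = \<xi> * Dsharp0 \<theta> \<theta>v \<xi>'"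
proof -
  have diag: "\<And>i. A i i = 2"
    using assms(1) by (simp add: simple_cartan_def is_GCM_def)
  have root: "(\<theta>, \<theta>v) \<in> rootpairs A"
    using assms(2) by (simp add: highest_root_def)
  have "twist (siP A i) (siQ A i) \<xi> = \<xi>" for i
    using assms(3) ee_nonzero unfolding Dsharp_def by (blast intro: twist_fixed_if_Dop_fixed)
  with root diag have fixed: "twist (reflP \<theta> \<theta>v) (reflQ \<theta> \<theta>v) \<xi> = \<xi>"
    by (rule rootpairs_twist_fixed)
  have "pairing \<theta>v \<theta> = 2"
    using root diag by (rule rootpairs_pairing_eq_2)
  moreover have "reflQ \<theta> \<theta>v (\<beta> + \<beta>' - \<theta>v) = reflQ \<theta> \<theta>v \<beta> + reflQ \<theta> \<theta>v (\<beta>' - \<theta>v)"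
    for \<beta> \<beta>'
    using additive.add[OF additive_reflQ] by (simp add: add_diff_eq[symmetric])
  ultimately show ?thesis
    unfolding Dsharp0_def
    by (intro Dop_mult_of_twist_fixed[where \<tau>\<^sub>1 = "reflQ \<theta> \<theta>v"])
      (simp_all add: additive_reflP inj_reflP fixed)
qed

end
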